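(* Let $a>0$, $p>1$, and let $\phi\in C^1((0,a])\cap C^0([0,a])$ satisfy $\phi(0)=0$, $\phi(t)>0$ for $t\in(0,a]$, and $c_1t^{p-1+\delta}\le\phi(t)\le c_2t^{p-1+\delta}$ for all $t\in(0,a]$, for some constants $c_1,c_2,\delta>0$. Define \[ \eta_a(t)=\frac{\phi(t)^{-\frac1{p-1}}}{\int_t^a\phi(\sigma)^{-\frac1{p-1}}\,d\sigma},\quad t\in(0,a). \] Then for all $t\in(0,a)$, \[ \left(\frac{c_1}{c_2}\right)^{\frac1{p-1}}\frac{\delta}{p-1}\,\frac{a^{\delta/(p-1)}}{t\,(a^{\delta/(p-1)}-t^{\delta/(p-1)})}\le\eta_a(t)\le\left(\frac{c_2}{c_1}\right)^{\frac1{p-1}}\frac{\delta}{p-1}\,\frac{a^{\delta/(p-1)}}{t\,(a^{\delta/(p-1)}-t^{\delta/(p-1)})}. \] *)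

theory Defs
  imports "HOL-Analysis.Analysis"
begin

definition eta :: "(real \<Rightarrow> real) \<Rightarrow> real \<Rightarrow> real \<Rightarrow> real \<Rightarrow> real" where
  "eta \<phi> p a t = (\<phi> t) powr (- 1 / (p - 1)) /
      integral {t..a} (\<lambda>\<sigma>. (\<phi> \<sigma>) powr (- 1 / (p - 1)))"

end

theory Submission
  imports Defs
begin

text \<open>
  With \<open>q = 1/(p-1)\<close> and \<open>e = \<delta>/(p-1)\<close>, the bounds on \<open>\<phi>\<close> pinch \<open>\<phi>\<^sup>-\<^sup>q\<close> between
  \<open>c\<^sub>2\<^sup>-\<^sup>q s\<^sup>-\<^sup>(\<^sup>1\<^sup>+\<^sup>e\<^sup>)\<close> and \<open>c\<^sub>1\<^sup>-\<^sup>q s\<^sup>-\<^sup>(\<^sup>1\<^sup>+\<^sup>e\<^sup>)\<close>. Bounding the numerator of \<open>\<eta>\<^sub>a(t)\<close> pointwise and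
  its denominator by integrating this pinching, \<open>\<eta>\<^sub>a(t)\<close> is within the factor
  \<open>(c\<^sub>2/c\<^sub>1)\<^sup>q\<close> of the same quotient for the pure power \<open>s\<^sup>-\<^sup>(\<^sup>1\<^sup>+\<^sup>e\<^sup>)\<close>, which is computed
  explicitly.
\<close>

lemma has_integral_powr_interval:
  fixes t a r :: real
  assumes "0 < t" "t \<le> a" "r \<noteq> -1"
  shows "((\<lambda>x. x powr r) has_integral (a powr (r + 1) - t powr (r + 1)) / (r + 1)) {t..a}"
proof -
  have "((\<lambda>x. x powr r) has_integral a powr (r + 1) / (r + 1) - t powr (r + 1) / (r + 1)) {t..a}"
    using assms
    by (intro fundamental_theorem_of_calculus)
       (auto intro!: derivative_eq_intros
             simp flip: has_real_derivative_iff_has_vector_derivative)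
  then show ?thesis
    by (simp add: diff_divide_distrib)
qed

lemma powr_neg_pinched_by_power:
  fixes x s k q c1 c2 :: real
  assumes "0 < c1" "0 < c2" "0 < s" "0 < x" "0 < q"
    and "c1 * s powr k \<le> x" "x \<le> c2 * s powr k"
  shows "c2 powr (-q) * s powr (-(k * q)) \<le> x powr (-q)
       \<and> x powr (-q) \<le> c1 powr (-q) * s powr (-(k * q))"
proof -
  have "(c2 * s powr k) powr (-q) \<le> x powr (-q)"
    using assms by (intro powr_mono2') auto
  moreover have "x powr (-q) \<le> (c1 * s powr k) powr (-q)"
    using assms by (intro powr_mono2') auto
  ultimately show ?thesis
    using assms by (simp add: powr_mult powr_powr)
qed

lemma quotient_by_integral_pinched:
  fixes f g :: "real \<Rightarrow> real" and t a m M J :: real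
  assumes "t \<le> a" "0 < m" "0 < J" "0 \<le> g t"
    and g: "(g has_integral J) {t..a}"
    and f: "f integrable_on {t..a}"
    and pinch: "\<And>s. s \<in> {t..a} \<Longrightarrow> m * g s \<le> f s \<and> f s \<le> M * g s"
  shows "m / M * (g t / J) \<le> f t / integral {t..a} f
       \<and> f t / integral {t..a} f \<le> M / m * (g t / J)"
proof -
  define I where "I = integral {t..a} f"
  have fI: "(f has_integral I) {t..a}"
    using integrable_integral[OF f] by (simp add: I_def)
  have lower: "m * J \<le> I"
    by (rule has_integral_le[OF has_integral_mult_right[OF g] fI]) (use pinch in blast)
  have upper: "I \<le> M * J"
    by (rule has_integral_le[OF fI has_integral_mult_right[OF g]]) (use pinch in blast)
  have "0 < m * J"
    using \<open>0 < m\<close> \<open>0 < J\<close> by simp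
  then have "0 < I"
    using lower by linarith
  have tt: "m * g t \<le> f t" "f t \<le> M * g t"
    using pinch[of t] \<open>t \<le> a\<close> by simp_all
  have "0 \<le> f t"
    using tt(1) \<open>0 < m\<close> \<open>0 \<le> g t\<close> by (meson mult_nonneg_nonneg less_imp_le order.trans)
  have "m / M * (g t / J) = (m * g t) / (M * J)"
    by simp
  also have "\<dots> \<le> f t / I"
    by (rule frac_le[OF \<open>0 \<le> f t\<close> tt(1) \<open>0 < I\<close> upper])
  finally have "m / M * (g t / J) \<le> f t / I" .
  moreover have "f t / I \<le> (M * g t) / (m * J)"
    using tt \<open>0 \<le> f t\<close> by (intro frac_le[OF _ tt(2) \<open>0 < m * J\<close> lower]) linarith
  then have "f t / I \<le> M / m * (g t / J)"
    by simp
  ultimately show ?thesis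
    unfolding I_def by (rule conjI)
qed

lemma powr_neg_over_integral:
  fixes t a e :: real
  assumes "0 < t" "t < a" "0 < e"
  shows "t powr (-(1 + e)) / ((a powr (-e) - t powr (-e)) / (-e))
       = e * (a powr e / (t * (a powr e - t powr e)))"
proof -
  define X where "X = t powr e"
  define Y where "Y = a powr e"
  have "0 < X" "X < Y"
    using assms by (auto simp: X_def Y_def powr_less_mono2)
  have "t powr (-(1 + e)) = inverse (t powr (1 + e))"
    by (rule powr_minus)
  also have "\<dots> = 1 / (t * X)"
    using assms by (simp add: X_def powr_add divide_inverse)
  finally have numerator: "t powr (-(1 + e)) = 1 / (t * X)" .
  have denominator: "a powr (-e) = 1 / Y" "t powr (-e) = 1 / X"
    by (simp_all add: X_def Y_def powr_minus divide_inverse)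
  show ?thesis
    unfolding numerator denominator X_def[symmetric] Y_def[symmetric]
    using \<open>0 < X\<close> \<open>X < Y\<close> assms by (simp add: field_simps)
qed

theorem lemma2p2:
  fixes \<phi> \<phi>' :: "real \<Rightarrow> real" and a p c1 c2 \<delta> :: real
  assumes "a > 0" and "p > 1"
    and cont: "continuous_on {0..a} \<phi>"
    and deriv: "\<And>t. t \<in> {0<..a} \<Longrightarrow> (\<phi> has_real_derivative \<phi>' t) (at t within {0<..a})"
    and deriv_cont: "continuous_on {0<..a} \<phi>'"
    and "\<phi> 0 = 0"
    and pos: "\<And>t. t \<in> {0<..a} \<Longrightarrow> \<phi> t > 0"
    and "c1 > 0" and "c2 > 0" and "\<delta> > 0"
    and bounds: "\<And>t. t \<in> {0<..a} \<Longrightarrow>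
        c1 * t powr (p - 1 + \<delta>) \<le> \<phi> t \<and> \<phi> t \<le> c2 * t powr (p - 1 + \<delta>)"
    and t: "t \<in> {0<..<a}"
  shows "(c1 / c2) powr (1 / (p - 1)) * (\<delta> / (p - 1)) *
           (a powr (\<delta> / (p - 1)) / (t * (a powr (\<delta> / (p - 1)) - t powr (\<delta> / (p - 1)))))
           \<le> eta \<phi> p a t
       \<and> eta \<phi> p a t \<le>
         (c2 / c1) powr (1 / (p - 1)) * (\<delta> / (p - 1)) *
           (a powr (\<delta> / (p - 1)) / (t * (a powr (\<delta> / (p - 1)) - t powr (\<delta> / (p - 1)))))"
proof -
  define q where "q = 1 / (p - 1)"
  define e where "e = \<delta> / (p - 1)"
  define g where "g s = s powr (-(1 + e))" for s :: real
  define J where "J = (a powr (-e) - t powr (-e)) / (-e)"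
  have "0 < q" "0 < e" "0 < t" "t < a"
    using assms by (auto simp: q_def e_def)
  have exponent: "(p - 1 + \<delta>) * q = 1 + e"
    using \<open>p > 1\<close> by (simp add: q_def e_def field_simps)
  have pinch: "c2 powr (-q) * g s \<le> \<phi> s powr (-q) \<and> \<phi> s powr (-q) \<le> c1 powr (-q) * g s"
    if "s \<in> {t..a}" for s
  proof -
    have s: "s \<in> {0<..a}"
      using that \<open>0 < t\<close> by auto
    then show ?thesis
      using powr_neg_pinched_by_power[OF \<open>c1 > 0\<close> \<open>c2 > 0\<close> _ pos[OF s] \<open>0 < q\<close>,
          where s = s and k = "p - 1 + \<delta>"] bounds[OF s]
      unfolding g_def exponent by simp
  qed
  have g_int: "(g has_integral J) {t..a}"
    using has_integral_powr_interval[of t a "-(1 + e)"] \<open>0 < t\<close> \<open>t < a\<close> \<open>0 < e\<close>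
    by (simp add: g_def[abs_def] J_def)
  have "a powr (-e) < t powr (-e)"
    using \<open>0 < t\<close> \<open>t < a\<close> \<open>0 < e\<close> by (intro powr_less_mono2_neg) auto
  then have "0 < J"
    using \<open>0 < e\<close> unfolding J_def by (intro divide_neg_neg) auto
  have "\<forall>s\<in>{t..a}. \<phi> s \<noteq> 0"
    using pos \<open>0 < t\<close> by (smt (verit) atLeastAtMost_iff greaterThanAtMost_iff)
  then have "(\<lambda>s. \<phi> s powr (-q)) integrable_on {t..a}"
    using \<open>0 < t\<close>
    by (intro integrable_continuous_interval continuous_on_powr
        continuous_on_subset[OF cont] continuous_on_const) fastforce+
  from quotient_by_integral_pinched[OF _ _ \<open>0 < J\<close> _ g_int this pinch]
  have bound: "c2 powr (-q) / c1 powr (-q) * (g t / J) \<le> eta \<phi> p a t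
      \<and> eta \<phi> p a t \<le> c1 powr (-q) / c2 powr (-q) * (g t / J)"
    using \<open>0 < t\<close> \<open>t < a\<close> \<open>c2 > 0\<close> by (simp add: eta_def q_def g_def)
  have ratio: "c2 powr (-q) / c1 powr (-q) = (c1 / c2) powr q"
    "c1 powr (-q) / c2 powr (-q) = (c2 / c1) powr q"
    using \<open>c1 > 0\<close> \<open>c2 > 0\<close> by (simp_all add: powr_minus powr_divide field_simps)
  have closed_form: "g t / J = e * (a powr e / (t * (a powr e - t powr e)))"
    using powr_neg_over_integral[of t a e] \<open>0 < t\<close> \<open>t < a\<close> \<open>0 < e\<close> by (simp add: g_def J_def)
  show ?thesis
    using bound unfolding ratio closed_form unfolding q_def e_def by (simp only: mult.assoc)
qed

end
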